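(* Assume (A.2). Let $\chi\ge0$ be such that \[ M(y^\star_h(0),y^\star_h(T))+\frac{r^2(y^\star_h,u^\star_h)}{2\omega}\le M(y^\star(0),y^\star(T))+\chi . \] Then $\delta\le\chi$ and $\rho\le\sqrt2\cdot\sqrt{M(y^\star(0),y^\star(T))-C_{obj}+\chi}\cdot\sqrt{\omega}$.
   Context: Setting: $T>0$; $M:\mathbb{R}^{n_y}\times\mathbb{R}^{n_y}\to\mathbb{R}$, $b:\mathbb{R}^{n_y}\times\mathbb{R}^{n_y}\to\mathbb{R}^{n_b}$, $f_1:\mathbb{R}^{n_y}\times\mathbb{R}^{n_u}\times[0,T]\to\mathbb{R}^{n_y}$, $f_2:\mathbb{R}^{n_y}\times\mathbb{R}^{n_u}\times[0,T]\to\mathbb{R}^{n_c}$, bound functions $y_L\le y_R$ on $[0,T]$. The optimal control problem is: minimize $M(y(0),y(T))$ over pairs $(y,u)$ ($y\in L^\infty$ with $\dot y\in L^2$, $u\in L^\infty$) subject to $b(y(0),y(T))=0$, $\dot y=f_1(y,u,t)$, $f_2(y,u,t)=0$ a.e., and pointwise bounds $y_L\le y\le y_R$, $u_L\le u\le u_R$; $(y^\star,u^\star)$ is a local minimizer. With $f(\dot y,y,u,t)=(f_1(y,u,t)-\dot y,f_2(y,u,t))$, $r(y,u)=(\int_0^T\|f(\dot y,y,u,t)\|_2^2dt+\|b(y(0),y(T))\|_2^2)^{1/2}$. $\omega>0$ is a penalty parameter. $(y^\star_h,u^\star_h)$ is a continuous-in-$y$ piecewise polynomial pair (the numerical minimizer)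 satisfying $y_L(t)\le y^\star_h(t)\le y_R(t)$ at $t=0$ and $t=T$. $\delta=\max\{0,M(y^\star_h(0),y^\star_h(T))-M(y^\star(0),y^\star(T))\}$ and $\rho=r(y^\star_h,u^\star_h)$. (A.2): there is $C_{obj}$ with $M(a,a')\ge C_{obj}$ for all $a,a'\in\mathbb{R}^{n_y}$ with $y_L(0)\le a\le y_R(0)$, $y_L(T)\le a'\le y_R(T)$. *)

theory Defs
  imports "HOL-Analysis.Analysis" "HOL-Computational_Algebra.Polynomial"
begin

definition vle :: "real^'n \<Rightarrow> real^'n \<Rightarrow> bool" where
  "vle x z \<longleftrightarrow> (\<forall>i. x $ i \<le> z $ i)"

text \<open>Residual r(y,u), with dy the (weak) derivative of y:
  r = (int_0^T ||f(dy,y,u,t)||_2^2 dt + ||b(y(0),y(T))||_2^2)^(1/2),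
  where f(dy,y,u,t) = (f1(y,u,t) - dy, f2(y,u,t)).\<close>
definition resid ::
  "(real^'ny \<Rightarrow> real^'nu \<Rightarrow> real \<Rightarrow> real^'ny) \<Rightarrow> (real^'ny \<Rightarrow> real^'nu \<Rightarrow> real \<Rightarrow> real^'nc)
   \<Rightarrow> (real^'ny \<Rightarrow> real^'ny \<Rightarrow> real^'nb) \<Rightarrow> real
   \<Rightarrow> (real \<Rightarrow> real^'ny) \<Rightarrow> (real \<Rightarrow> real^'ny) \<Rightarrow> (real \<Rightarrow> real^'nu) \<Rightarrow> real" where
  "resid f1 f2 b T dy y u =
     sqrt (integral {0..T} (\<lambda>t. (norm (f1 (y t) (u t) t - dy t))\<^sup>2 + (norm (f2 (y t) (u t) t))\<^sup>2)
           + (norm (b (y 0) (y T)))\<^sup>2)"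

text \<open>Feasible pair (y,u) with weak derivative dy: y is absolutely continuous with
  derivative dy in L^2, y and u essentially bounded, constraints hold.\<close>
definition feasible ::
  "real \<Rightarrow> (real^'ny \<Rightarrow> real^'ny \<Rightarrow> real^'nb)
   \<Rightarrow> (real^'ny \<Rightarrow> real^'nu \<Rightarrow> real \<Rightarrow> real^'ny) \<Rightarrow> (real^'ny \<Rightarrow> real^'nu \<Rightarrow> real \<Rightarrow> real^'nc)
   \<Rightarrow> (real \<Rightarrow> real^'ny) \<Rightarrow> (real \<Rightarrow> real^'ny) \<Rightarrow> (real \<Rightarrow> real^'nu) \<Rightarrow> (real \<Rightarrow> real^'nu)
   \<Rightarrow> (real \<Rightarrow> real^'ny) \<Rightarrow> (real \<Rightarrow> real^'ny) \<Rightarrow> (real \<Rightarrow> real^'nu) \<Rightarrow> bool" where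
  "feasible T b f1 f2 yL yR uL uR y dy u \<longleftrightarrow>
     dy integrable_on {0..T} \<and> (\<lambda>t. (norm (dy t))\<^sup>2) integrable_on {0..T} \<and>
     (\<forall>t\<in>{0..T}. y t = y 0 + integral {0..t} dy) \<and>
     bounded (y ` {0..T}) \<and>
     u \<in> borel_measurable (lebesgue_on {0..T}) \<and>
     (\<exists>K. AE t in lebesgue_on {0..T}. norm (u t) \<le> K) \<and>
     b (y 0) (y T) = 0 \<and>
     (AE t in lebesgue_on {0..T}. dy t = f1 (y t) (u t) t \<and> f2 (y t) (u t) t = 0) \<and>
     (\<forall>t\<in>{0..T}. vle (yL t) (y t) \<and> vle (y t) (yR t)) \<and>
     (AE t in lebesgue_on {0..T}. vle (uL t) (u t) \<and> vle (u t) (uR t))"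

definition local_minimizer ::
  "real \<Rightarrow> (real^'ny \<Rightarrow> real^'ny \<Rightarrow> real) \<Rightarrow> (real^'ny \<Rightarrow> real^'ny \<Rightarrow> real^'nb)
   \<Rightarrow> (real^'ny \<Rightarrow> real^'nu \<Rightarrow> real \<Rightarrow> real^'ny) \<Rightarrow> (real^'ny \<Rightarrow> real^'nu \<Rightarrow> real \<Rightarrow> real^'nc)
   \<Rightarrow> (real \<Rightarrow> real^'ny) \<Rightarrow> (real \<Rightarrow> real^'ny) \<Rightarrow> (real \<Rightarrow> real^'nu) \<Rightarrow> (real \<Rightarrow> real^'nu)
   \<Rightarrow> (real \<Rightarrow> real^'ny) \<Rightarrow> (real \<Rightarrow> real^'ny) \<Rightarrow> (real \<Rightarrow> real^'nu) \<Rightarrow> bool" where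
  "local_minimizer T M b f1 f2 yL yR uL uR ys dys us \<longleftrightarrow>
     feasible T b f1 f2 yL yR uL uR ys dys us \<and>
     (\<exists>\<epsilon>>0. \<forall>y dy u. feasible T b f1 f2 yL yR uL uR y dy u \<and>
        (\<forall>t\<in>{0..T}. norm (y t - ys t) < \<epsilon>) \<and>
        (AE t in lebesgue_on {0..T}. norm (u t - us t) < \<epsilon>)
        \<longrightarrow> M (ys 0) (ys T) \<le> M (y 0) (y T))"

definition piecewise_poly_pair ::
  "real \<Rightarrow> (real \<Rightarrow> real^'ny) \<Rightarrow> (real \<Rightarrow> real^'nu) \<Rightarrow> bool" where
  "piecewise_poly_pair T yh uh \<longleftrightarrow>
     continuous_on {0..T} yh \<and>
     (\<exists>S. finite S \<and> (\<forall>a c. a < c \<and> {a<..<c} \<subseteq> {0..T} - S \<longrightarrow>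
        (\<forall>i. \<exists>p::real poly. \<forall>t\<in>{a<..<c}. yh t $ i = poly p t) \<and>
        (\<forall>i. \<exists>p::real poly. \<forall>t\<in>{a<..<c}. uh t $ i = poly p t)))"

end

theory Submission
  imports Defs
begin

text \<open>The penalty term \<open>r\<^sup>2 / (2 \<omega>)\<close> is nonnegative, so dropping it from the hypothesis
  bounds the optimality gap \<open>\<delta>\<close> by \<open>\<chi>\<close>. Conversely, since \<open>y\<^sub>h\<close> satisfies the bounds at
  \<open>0\<close> and \<open>T\<close>, (A.2) gives \<open>M(y\<^sub>h(0), y\<^sub>h(T)) \<ge> C\<^sub>o\<^sub>b\<^sub>j\<close>; replacing the objective by this lower bound
  leaves \<open>r\<^sup>2 \<le> 2 \<omega> (M(y\<^sup>\<star>(0), y\<^sup>\<star>(T)) - C\<^sub>o\<^sub>b\<^sub>j + \<chi>)\<close>, and a square root gives the bound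
  on \<open>\<rho>\<close>.\<close>

text \<open>Holds without integrability because a non-integrable function has integral \<open>0\<close>.\<close>
lemma integral_nonneg_any:
  fixes f :: "'n::euclidean_space \<Rightarrow> real"
  assumes "\<And>x. x \<in> S \<Longrightarrow> 0 \<le> f x"
  shows "0 \<le> integral S f"
  using assms integral_nonneg not_integrable_integral by (metis order_refl)

lemma resid_nonneg: "0 \<le> resid f1 f2 b T dy y u"
  unfolding resid_def by (simp add: integral_nonneg_any)

lemma penalty_gap_le:
  fixes m ms r w chi :: real
  assumes "w > 0" "chi \<ge> 0" "m + r\<^sup>2 / (2 * w) \<le> ms + chi"
  shows "max 0 (m - ms) \<le> chi"
proof -
  have "0 \<le> r\<^sup>2 / (2 * w)" using \<open>w > 0\<close> by simp
  then show ?thesis using assms(2,3) by linarith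
qed

lemma penalty_residual_le:
  fixes m ms r w chi C :: real
  assumes "w > 0" "r \<ge> 0" "C \<le> m" "m + r\<^sup>2 / (2 * w) \<le> ms + chi"
  shows "r \<le> sqrt 2 * sqrt (ms - C + chi) * sqrt w"
proof -
  have "r\<^sup>2 / (2 * w) \<le> ms - C + chi" using assms(3,4) by linarith
  then have "r\<^sup>2 \<le> 2 * (ms - C + chi) * w" using \<open>w > 0\<close> by (simp add: divide_le_eq mult_ac)
  then have "sqrt (r\<^sup>2) \<le> sqrt (2 * (ms - C + chi) * w)" by (rule real_sqrt_le_mono)
  also have "\<dots> = sqrt 2 * sqrt (ms - C + chi) * sqrt w" by (simp only: real_sqrt_mult)
  finally show ?thesis using \<open>r \<ge> 0\<close> by simp
qed

theorem mainTheorem6: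
  fixes T omega chi C_obj :: real
    and M :: "real^'ny \<Rightarrow> real^'ny \<Rightarrow> real"
    and b :: "real^'ny \<Rightarrow> real^'ny \<Rightarrow> real^'nb"
    and f1 :: "real^'ny \<Rightarrow> real^'nu \<Rightarrow> real \<Rightarrow> real^'ny"
    and f2 :: "real^'ny \<Rightarrow> real^'nu \<Rightarrow> real \<Rightarrow> real^'nc"
    and yL yR :: "real \<Rightarrow> real^'ny" and uL uR :: "real \<Rightarrow> real^'nu"
    and ys dys yh :: "real \<Rightarrow> real^'ny" and us uh :: "real \<Rightarrow> real^'nu"
  assumes T_pos: "T > 0"
    and bounds: "\<forall>t\<in>{0..T}. vle (yL t) (yR t)"
    and locmin: "local_minimizer T M b f1 f2 yL yR uL uR ys dys us"
    and omega_pos: "omega > 0"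
    and pwpoly: "piecewise_poly_pair T yh uh"
    and yh_bd0: "vle (yL 0) (yh 0) \<and> vle (yh 0) (yR 0)"
    and yh_bdT: "vle (yL T) (yh T) \<and> vle (yh T) (yR T)"
    and A2: "\<forall>a a'. vle (yL 0) a \<and> vle a (yR 0) \<and> vle (yL T) a' \<and> vle a' (yR T)
               \<longrightarrow> M a a' \<ge> C_obj"
    and chi_nonneg: "chi \<ge> 0"
    and chi: "M (yh 0) (yh T) + (resid f1 f2 b T (\<lambda>t. vector_derivative yh (at t)) yh uh)\<^sup>2 / (2 * omega)
              \<le> M (ys 0) (ys T) + chi"
  shows "max 0 (M (yh 0) (yh T) - M (ys 0) (ys T)) \<le> chi \<and>
         resid f1 f2 b T (\<lambda>t. vector_derivative yh (at t)) yh uh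
           \<le> sqrt 2 * sqrt (M (ys 0) (ys T) - C_obj + chi) * sqrt omega"
proof
  show "max 0 (M (yh 0) (yh T) - M (ys 0) (ys T)) \<le> chi"
    using penalty_gap_le[OF omega_pos chi_nonneg chi] .
  have "C_obj \<le> M (yh 0) (yh T)" using A2 yh_bd0 yh_bdT by blast
  then show "resid f1 f2 b T (\<lambda>t. vector_derivative yh (at t)) yh uh
      \<le> sqrt 2 * sqrt (M (ys 0) (ys T) - C_obj + chi) * sqrt omega"
    using penalty_residual_le[OF omega_pos resid_nonneg _ chi] by blast
qed

end
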